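(* Let $G$ be a non-trivial graph with $m$ edges, maximum degree $\Delta$ and minimum degree $\delta$. Then $$ GA_1(\mathcal{L}(G)) \ge \min \Big\{ \, \frac{1}{4(\Delta-1)} \,,\, \frac{\sqrt{ (\Delta-1)(\delta-1)}}{(\Delta+\delta-2)^2} \, \Big\} \big(4m - 4M_1(G) +2 M_2(G) + F(G)\big) . $$
   Context: All graphs are finite and simple. A graph is non-trivial if each of its connected components has at least two edges. $d_u$ is the degree of $u$. $M_1(G)=\sum_{u\in V(G)}d_u^2$, $M_2(G)=\sum_{uv\in E(G)}d_ud_v$, $F(G)=\sum_{u\in V(G)}d_u^3$ (forgotten index), and $GA_1(G)=\sum_{uv\in E(G)}\frac{\sqrt{d_ud_v}}{\frac12(d_u+d_v)}$. The line graph $\mathcal{L}(G)$ has vertex set $E(G)$, two vertices being adjacent iff the corresponding edges share an end vertex in $G$. *)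

theory Defs
  imports Complex_Main
begin

definition simple_graph :: "'a set \<Rightarrow> 'a set set \<Rightarrow> bool" where
  "simple_graph V E \<longleftrightarrow> finite V \<and>
     (\<forall>e\<in>E. \<exists>u v. e = {u, v} \<and> u \<noteq> v \<and> u \<in> V \<and> v \<in> V)"

definition degree :: "'a set set \<Rightarrow> 'a \<Rightarrow> nat" where
  "degree E u = card {e\<in>E. u \<in> e}"

definition adj :: "'a set set \<Rightarrow> 'a \<Rightarrow> 'a \<Rightarrow> bool" where
  "adj E u v \<longleftrightarrow> {u, v} \<in> E"

definition component :: "'a set \<Rightarrow> 'a set set \<Rightarrow> 'a \<Rightarrow> 'a set" where
  "component V E u = {v\<in>V. (adj E)\<^sup>*\<^sup>* u v}"

definition nontrivial_graph :: "'a set \<Rightarrow> 'a set set \<Rightarrow> bool" where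
  "nontrivial_graph V E \<longleftrightarrow>
     (\<forall>u\<in>V. card {e\<in>E. e \<subseteq> component V E u} \<ge> 2)"

definition max_degree :: "'a set \<Rightarrow> 'a set set \<Rightarrow> nat" where
  "max_degree V E = Max (degree E ` V)"

definition min_degree :: "'a set \<Rightarrow> 'a set set \<Rightarrow> nat" where
  "min_degree V E = Min (degree E ` V)"

definition M1 :: "'a set \<Rightarrow> 'a set set \<Rightarrow> real" where
  "M1 V E = (\<Sum>u\<in>V. real (degree E u) ^ 2)"

definition M2 :: "'a set \<Rightarrow> 'a set set \<Rightarrow> real" where
  "M2 V E = (\<Sum>e\<in>E. \<Prod>u\<in>e. real (degree E u))"

definition forgotten :: "'a set \<Rightarrow> 'a set set \<Rightarrow> real" where
  "forgotten V E = (\<Sum>u\<in>V. real (degree E u) ^ 3)"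

definition GA1 :: "'a set \<Rightarrow> 'a set set \<Rightarrow> real" where
  "GA1 V E = (\<Sum>e\<in>E. sqrt (\<Prod>u\<in>e. real (degree E u)) / ((\<Sum>u\<in>e. real (degree E u)) / 2))"

definition line_graph_edges :: "'a set set \<Rightarrow> 'a set set set" where
  "line_graph_edges E = {{e, f} | e f. e \<in> E \<and> f \<in> E \<and> e \<noteq> f \<and> e \<inter> f \<noteq> {}}"

end

theory Submission
  imports Defs "HOL-Analysis.Convex"
begin

text \<open>The degree of the edge uv in the line graph is d_u + d_v - 2, so the degrees of L(G) lie in
  [2(\<delta> - 1), 2(\<Delta> - 1)] and M1(L(G)) = 4m - 4M1(G) + 2M2(G) + F(G). It therefore suffices to
  show GA1(H) \<ge> c M1(H) for every graph H with degrees in [\<delta>', \<Delta>'], where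
  c = min (1/(2\<Delta>')) (2 sqrt(\<Delta>'\<delta>')/(\<Delta>'+\<delta>')^2). Since M1(H) is the sum over the edges ab of
  d_a + d_b, this reduces to the inequality c (a + b) \<le> 2 sqrt(ab)/(a + b) for a, b in [\<delta>', \<Delta>'].\<close>

lemma quartic_le_affine_on_interval:
  fixes C \<alpha> \<beta> x y z :: real
  assumes "0 \<le> C" "z \<in> {x..y}"
    and "C * x^4 \<le> \<alpha> * x - \<beta>" "C * y^4 \<le> \<alpha> * y - \<beta>"
  shows "C * z^4 \<le> \<alpha> * z - \<beta>"
proof -
  have "convex_on UNIV (\<lambda>t::real. C * t^4 + (\<beta> - \<alpha> * t))"
  proof (rule convex_on_add)
    show "convex_on UNIV (\<lambda>t::real. C * t^4)"
      using convex_power_even[of 4] assms(1) by (intro convex_on_cmul) auto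
    show "convex_on UNIV (\<lambda>t::real. \<beta> - \<alpha> * t)"
      by (rule convex_on_linorderI) (auto simp: algebra_simps)
  qed
  then have "convex_on {x..y} (\<lambda>t. C * t^4 + (\<beta> - \<alpha> * t))"
    using convex_on_subset by blast
  from convex_on_le_max[OF this assms(2)] assms(3,4) show ?thesis by simp
qed

lemma quartic_of_sum_le_four_mul:
  fixes \<delta> \<Delta> a b c :: real
  assumes "0 < \<delta>" "a \<in> {\<delta>..\<Delta>}" "b \<in> {\<delta>..\<Delta>}" "0 < c"
    and c_le: "c \<le> 1 / (2 * \<Delta>)" "c \<le> 2 * sqrt (\<Delta> * \<delta>) / (\<Delta> + \<delta>)^2"
  shows "c^2 * (a + b)^4 \<le> 4 * (a * b)"
proof -
  text \<open>The quartic c^2 x^4 is convex in x = a + b, while 4ab lies above two affine functions of x,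
    obtained from (a - \<delta>)(b - \<delta>) \<ge> 0 and (\<Delta> - a)(\<Delta> - b) \<ge> 0; so it is enough to compare them
    at x = 2\<delta>, \<delta> + \<Delta> and 2\<Delta>, which is where the two bounds on c enter.\<close>
  define x where "x = a + b"
  have "\<delta> \<le> \<Delta>" using assms by auto
  have at_end: "c^2 * (2*t)^4 \<le> 4*t * (2*t) - 4*t^2" if "0 \<le> t" "t \<le> \<Delta>" for t
  proof -
    have "0 < \<Delta>" using \<open>0 < \<delta>\<close> \<open>\<delta> \<le> \<Delta>\<close> by linarith
    then have "2*c*\<Delta> \<le> 1" using c_le(1) by (simp add: field_simps)
    moreover have "2*c*t \<le> 2*c*\<Delta>" using \<open>0 < c\<close> that by simp
    ultimately have "2*c*t \<le> 1" by linarith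
    then have "(2*c*t)^2 \<le> 1" using \<open>0 < c\<close> that by (simp add: power_le_one)
    then show ?thesis
      using mult_right_mono[of "(2*c*t)^2" 1 "4*t^2"]
      by (simp add: power_mult_distrib power2_eq_square power4_eq_xxxx algebra_simps)
  qed
  have "c * (\<Delta> + \<delta>)^2 \<le> 2 * sqrt (\<Delta> * \<delta>)"
    using c_le(2) \<open>0 < \<delta>\<close> \<open>\<delta> \<le> \<Delta>\<close> by (simp add: field_simps)
  then have "(c * (\<Delta> + \<delta>)^2)^2 \<le> 4 * (\<Delta> * \<delta>)"
    using \<open>0 < c\<close> \<open>0 < \<delta>\<close> \<open>\<delta> \<le> \<Delta>\<close> power_mono[of _ _ 2]
    by (fastforce simp: power_mult_distrib)
  then have at_mid: "c^2 * (\<Delta> + \<delta>)^4 \<le> 4*\<delta> * (\<Delta> + \<delta>) - 4*\<delta>^2"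
    "c^2 * (\<Delta> + \<delta>)^4 \<le> 4*\<Delta> * (\<Delta> + \<delta>) - 4*\<Delta>^2"
    by (simp_all add: power_mult_distrib algebra_simps power2_eq_square power4_eq_xxxx)
  have "(a - \<delta>) * (b - \<delta>) \<ge> 0" "(\<Delta> - a) * (\<Delta> - b) \<ge> 0" using assms by auto
  then have below_ab: "4*\<delta> * x - 4*\<delta>^2 \<le> 4 * (a*b)" "4*\<Delta> * x - 4*\<Delta>^2 \<le> 4 * (a*b)"
    by (simp_all add: x_def algebra_simps power2_eq_square)
  show ?thesis
    unfolding x_def[symmetric]
  proof (cases "x \<le> \<Delta> + \<delta>")
    case True
    then have "c^2 * x^4 \<le> 4*\<delta> * x - 4*\<delta>^2"
      using assms
      by (intro quartic_le_affine_on_interval[OF _ _ at_end[OF _ \<open>\<delta> \<le> \<Delta>\<close>] at_mid(1)])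
        (auto simp: x_def)
    with below_ab show "c^2 * x^4 \<le> 4 * (a*b)" by linarith
  next
    case False
    then have "c^2 * x^4 \<le> 4*\<Delta> * x - 4*\<Delta>^2"
      using assms
      by (intro quartic_le_affine_on_interval[OF _ _ at_mid(2) at_end[OF _ order.refl]])
        (auto simp: x_def)
    with below_ab show "c^2 * x^4 \<le> 4 * (a*b)" by linarith
  qed
qed

lemma geometric_over_arithmetic_mean_ge:
  fixes \<delta> \<Delta> a b c :: real
  assumes "0 < \<delta>" "a \<in> {\<delta>..\<Delta>}" "b \<in> {\<delta>..\<Delta>}"
    and "c \<le> 1 / (2 * \<Delta>)" "c \<le> 2 * sqrt (\<Delta> * \<delta>) / (\<Delta> + \<delta>)^2"
  shows "c * (a + b) \<le> sqrt (a * b) / ((a + b) / 2)"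
proof (cases "c \<le> 0")
  case True
  then show ?thesis
    using assms by (intro order.trans[OF mult_nonpos_nonneg]) auto
next
  case False
  have "0 < a + b" using assms by auto
  have "c * (a + b)^2 = sqrt ((c * (a + b)^2)^2)" using False by simp
  also have "\<dots> \<le> sqrt (4 * (a * b))"
    using quartic_of_sum_le_four_mul[of \<delta> a \<Delta> b c] assms False
    by (simp add: power_mult_distrib flip: power_mult)
  also have "\<dots> = 2 * sqrt (a * b)" by (simp add: real_sqrt_mult)
  finally show ?thesis
    using \<open>0 < a + b\<close> by (simp add: field_simps power2_eq_square)
qed

lemma simple_graph_edgeE:
  assumes "simple_graph V E" "e \<in> E"
  obtains u v where "e = {u, v}" "u \<noteq> v" "u \<in> V" "v \<in> V"
  using assms unfolding simple_graph_def by blast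

lemma simple_graph_edge_subset:
  assumes "simple_graph V E" "e \<in> E"
  shows "e \<subseteq> V"
  using assms by (elim simple_graph_edgeE) auto

lemma simple_graph_finite_edges:
  assumes "simple_graph V E"
  shows "finite E"
proof (rule finite_subset)
  show "E \<subseteq> Pow V" using simple_graph_edge_subset[OF assms] by blast
  show "finite (Pow V)" using assms by (simp add: simple_graph_def)
qed

lemma sum_edges_sum_endpoints:
  fixes g :: "'a \<Rightarrow> real"
  assumes "simple_graph V E"
  shows "(\<Sum>e\<in>E. \<Sum>u\<in>e. g u) = (\<Sum>u\<in>V. real (degree E u) * g u)"
proof -
  have finV: "finite V" using assms by (simp add: simple_graph_def)
  have "(\<Sum>e\<in>E. \<Sum>u\<in>e. g u) = (\<Sum>e\<in>E. \<Sum>u\<in>{u\<in>V. u \<in> e}. g u)"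
    using simple_graph_edge_subset[OF assms] by (intro sum.cong) auto
  also have "\<dots> = (\<Sum>u\<in>V. \<Sum>e\<in>{e\<in>E. u \<in> e}. g u)"
    by (rule sum.swap_restrict[OF simple_graph_finite_edges[OF assms] finV])
  also have "\<dots> = (\<Sum>u\<in>V. real (degree E u) * g u)"
    by (simp add: degree_def)
  finally show ?thesis .
qed

lemma M1_eq_sum_edges:
  assumes "simple_graph V E"
  shows "M1 V E = (\<Sum>e\<in>E. \<Sum>u\<in>e. real (degree E u))"
  unfolding M1_def sum_edges_sum_endpoints[OF assms] by (simp add: power2_eq_square)

lemma simple_graph_line_graph:
  assumes "simple_graph V E"
  shows "simple_graph E (line_graph_edges E)"
  using simple_graph_finite_edges[OF assms]
  unfolding simple_graph_def line_graph_edges_def by blast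

lemma degree_line_graph:
  assumes "simple_graph V E" "{u, v} \<in> E" "u \<noteq> v"
  shows "degree (line_graph_edges E) {u, v} + 2 = degree E u + degree E v"
proof -
  define e where "e = {u, v}"
  define A where "A = {f\<in>E. u \<in> f}"
  define B where "B = {f\<in>E. v \<in> f}"
  have fin: "finite A" "finite B"
    using simple_graph_finite_edges[OF assms(1)] by (auto simp: A_def B_def)
  have "A \<inter> B = {e}"
  proof -
    have "f = e" if f: "f \<in> E" "u \<in> f" "v \<in> f" for f
    proof -
      obtain x y where "f = {x, y}" using simple_graph_edgeE[OF assms(1) f(1)] by metis
      then show ?thesis using f(2,3) assms(3) unfolding e_def by blast
    qed
    then show ?thesis using assms(2) unfolding A_def B_def e_def by blast
  qed
  have "{h \<in> line_graph_edges E. e \<in> h} = (\<lambda>f. {e, f}) ` (A \<union> B - {e})"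
  proof (intro equalityI subsetI)
    fix h assume "h \<in> {h \<in> line_graph_edges E. e \<in> h}"
    then obtain f where "h = {e, f}" "f \<in> E" "f \<noteq> e" "f \<inter> e \<noteq> {}"
      unfolding line_graph_edges_def by (auto simp: insert_commute)
    then show "h \<in> (\<lambda>f. {e, f}) ` (A \<union> B - {e})"
      unfolding A_def B_def e_def by blast
  next
    fix h assume "h \<in> (\<lambda>f. {e, f}) ` (A \<union> B - {e})"
    then show "h \<in> {h \<in> line_graph_edges E. e \<in> h}"
      using assms(2) unfolding line_graph_edges_def A_def B_def e_def by blast
  qed
  moreover have "inj_on (\<lambda>f. {e, f}) (A \<union> B - {e})"
    by (auto simp: inj_on_def doubleton_eq_iff)
  ultimately have "degree (line_graph_edges E) e = card (A \<union> B - {e})"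
    by (simp add: degree_def card_image)
  moreover have "card (A \<union> B - {e}) + 2 = card A + card B"
  proof -
    have "e \<in> A \<union> B" using \<open>A \<inter> B = {e}\<close> by blast
    then have "card (A \<union> B - {e}) + 1 = card (A \<union> B)"
      using fin card_Suc_Diff1[of "A \<union> B" e] by simp
    with card_Un_Int[OF fin] \<open>A \<inter> B = {e}\<close> show ?thesis by simp
  qed
  ultimately show ?thesis by (simp add: degree_def A_def B_def e_def)
qed

lemma M1_line_graph:
  assumes "simple_graph V E"
  shows "M1 E (line_graph_edges E) = 4 * real (card E) - 4 * M1 V E + 2 * M2 V E + forgotten V E"
proof -
  let ?d = "\<lambda>u. real (degree E u)"
  have deg_sq: "real (degree (line_graph_edges E) e)^2
      = (\<Sum>u\<in>e. ?d u ^ 2) + 2 * (\<Prod>u\<in>e. ?d u) - 4 * (\<Sum>u\<in>e. ?d u) + 4"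
    if "e \<in> E" for e
  proof -
    obtain u v where e: "e = {u, v}" "u \<noteq> v"
      using simple_graph_edgeE[OF assms \<open>e \<in> E\<close>] by metis
    then have d_line: "real (degree (line_graph_edges E) e) = ?d u + ?d v - 2"
      using degree_line_graph[OF assms] \<open>e \<in> E\<close>
      by (metis add_diff_cancel_right' of_nat_add of_nat_numeral)
    show ?thesis unfolding d_line unfolding e(1) using e(2) by (simp add: power2_eq_square algebra_simps)
  qed
  have "M1 E (line_graph_edges E)
      = (\<Sum>e\<in>E. \<Sum>u\<in>e. ?d u ^ 2) + 2 * M2 V E - 4 * (\<Sum>e\<in>E. \<Sum>u\<in>e. ?d u)
        + 4 * real (card E)"
    by (simp add: M1_def M2_def deg_sq sum.distrib sum_subtractf sum_distrib_left)
  also have "(\<Sum>e\<in>E. \<Sum>u\<in>e. ?d u ^ 2) = forgotten V E"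
    by (simp add: sum_edges_sum_endpoints[OF assms] forgotten_def power3_eq_cube power2_eq_square mult.assoc)
  finally show ?thesis by (simp add: M1_eq_sum_edges[OF assms])
qed

lemma GA1_ge_M1:
  fixes \<delta> \<Delta> :: real
  assumes "simple_graph V E"
    and deg: "\<forall>u\<in>V. \<delta> \<le> real (degree E u) \<and> real (degree E u) \<le> \<Delta>"
  shows "min (1 / (2 * \<Delta>)) (2 * sqrt (\<Delta> * \<delta>) / (\<Delta> + \<delta>)^2) * M1 V E \<le> GA1 V E"
proof -
  define c where "c = min (1 / (2 * \<Delta>)) (2 * sqrt (\<Delta> * \<delta>) / (\<Delta> + \<delta>)^2)"
  have "0 \<le> GA1 V E"
    unfolding GA1_def by (intro sum_nonneg divide_nonneg_nonneg) (auto intro: sum_nonneg prod_nonneg)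
  show ?thesis
  proof (cases "c \<le> 0")
    case True
    have "0 \<le> M1 V E" unfolding M1_def by (intro sum_nonneg) auto
    with True \<open>0 \<le> GA1 V E\<close> show ?thesis
      unfolding c_def by (meson mult_nonpos_nonneg order.trans)
  next
    case False
    then have "0 < 2 * sqrt (\<Delta> * \<delta>) / (\<Delta> + \<delta>)^2" "0 < 1 / (2 * \<Delta>)"
      unfolding c_def by linarith+
    then have "0 < \<Delta> * \<delta>" "0 < \<Delta>"
      by (auto simp: zero_less_divide_iff)
    then have "0 < \<delta>" by (simp add: zero_less_mult_iff)
    have "c * M1 V E = (\<Sum>e\<in>E. c * (\<Sum>u\<in>e. real (degree E u)))"
      by (simp add: M1_eq_sum_edges[OF assms(1)] sum_distrib_left)
    also have "\<dots> \<le>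
        (\<Sum>e\<in>E. sqrt (\<Prod>u\<in>e. real (degree E u)) / ((\<Sum>u\<in>e. real (degree E u)) / 2))"
    proof (rule sum_mono)
      fix e assume "e \<in> E"
      then obtain u v where e: "e = {u, v}" "u \<noteq> v" "u \<in> V" "v \<in> V"
        by (rule simple_graph_edgeE[OF assms(1)])
      have "c * (real (degree E u) + real (degree E v))
          \<le> sqrt (real (degree E u) * real (degree E v)) / ((real (degree E u) + real (degree E v)) / 2)"
        using deg e(3,4) \<open>0 < \<delta>\<close>
        by (intro geometric_over_arithmetic_mean_ge[where \<delta> = \<delta> and \<Delta> = \<Delta>])
          (auto simp: c_def)
      with e(1,2) show "c * (\<Sum>u\<in>e. real (degree E u))
          \<le> sqrt (\<Prod>u\<in>e. real (degree E u)) / ((\<Sum>u\<in>e. real (degree E u)) / 2)"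
        by simp
    qed
    also have "\<dots> = GA1 V E" by (simp add: GA1_def)
    finally show ?thesis unfolding c_def .
  qed
qed

lemma degree_line_graph_bounds:
  assumes "simple_graph V E" "e \<in> E"
  shows "2 * (real (min_degree V E) - 1) \<le> real (degree (line_graph_edges E) e)
    \<and> real (degree (line_graph_edges E) e) \<le> 2 * (real (max_degree V E) - 1)"
proof -
  obtain u v where e: "e = {u, v}" "u \<noteq> v" "u \<in> V" "v \<in> V"
    using simple_graph_edgeE[OF assms] by metis
  have "finite V" using assms(1) by (simp add: simple_graph_def)
  then have "real (min_degree V E) \<le> degree E u" "real (min_degree V E) \<le> degree E v"
    "degree E u \<le> real (max_degree V E)" "degree E v \<le> real (max_degree V E)"
    using e(3,4) by (auto simp: min_degree_def max_degree_def)
  moreover have "real (degree (line_graph_edges E) e) + 2 = real (degree E u) + real (degree E v)"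
    using degree_line_graph[OF assms(1)] e(1,2) assms(2) by (metis of_nat_add of_nat_numeral)
  ultimately show ?thesis by auto
qed

theorem proposition2p8:
  fixes V :: "'a set" and E :: "'a set set"
  assumes "simple_graph V E" and "nontrivial_graph V E"
  shows "GA1 E (line_graph_edges E) \<ge>
    min (1 / (4 * (real (max_degree V E) - 1)))
        (sqrt ((real (max_degree V E) - 1) * (real (min_degree V E) - 1))
           / (real (max_degree V E) + real (min_degree V E) - 2) ^ 2)
    * (4 * real (card E) - 4 * M1 V E + 2 * M2 V E + forgotten V E)"
proof -
  define \<Delta> where "\<Delta> = real (max_degree V E)"
  define \<delta> where "\<delta> = real (min_degree V E)"
  have line_degrees: "\<forall>e\<in>E. 2 * (\<delta> - 1) \<le> real (degree (line_graph_edges E) e)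
      \<and> real (degree (line_graph_edges E) e) \<le> 2 * (\<Delta> - 1)"
    using degree_line_graph_bounds[OF assms(1)] by (simp add: \<Delta>_def \<delta>_def)
  have "sqrt (2 * (\<Delta> - 1) * (2 * (\<delta> - 1))) = 2 * sqrt ((\<Delta> - 1) * (\<delta> - 1))"
    using real_sqrt_mult[of 4 "(\<Delta> - 1) * (\<delta> - 1)"] by (simp add: algebra_simps)
  moreover have "(2 * (\<Delta> - 1) + 2 * (\<delta> - 1))^2 = 4 * (\<Delta> + \<delta> - 2)^2"
    by (simp add: power2_eq_square algebra_simps)
  ultimately have GA1_constant: "min (1 / (2 * (2 * (\<Delta> - 1))))
      (2 * sqrt (2 * (\<Delta> - 1) * (2 * (\<delta> - 1))) / (2 * (\<Delta> - 1) + 2 * (\<delta> - 1))^2)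
      = min (1 / (4 * (\<Delta> - 1))) (sqrt ((\<Delta> - 1) * (\<delta> - 1)) / (\<Delta> + \<delta> - 2)^2)"
    by simp
  from GA1_ge_M1[OF simple_graph_line_graph[OF assms(1)] line_degrees] show ?thesis
    unfolding GA1_constant unfolding M1_line_graph[OF assms(1)] \<Delta>_def \<delta>_def .
qed

end
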